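(* Let $n$, $k$, $t$ be positive integers with $k\geq t+1$ and $n\geq 2k$, and let $V$ be an $n$-dimensional vector space over $\mathbb{F}_q$. If $\mathcal{F}\subseteq{V\brack k}$ is an almost $t$-intersecting family with $\tau_t(\mathcal{F})\geq k+1$, then $|\mathcal{F}|\leq\binom{2k-2t+2}{k-t+1}$.
   Context: $q$ is a prime power; ${W\brack k}$ is the set of $k$-dimensional subspaces of $W$. A family $\mathcal{F}\subseteq{V\brack k}$ is almost $t$-intersecting if for each $F\in\mathcal{F}$ there is at most one $F'\in\mathcal{F}$ with $\dim(F\cap F')<t$. A subspace $W$ of $V$ is a $t$-cover of $\mathcal{F}$ if $\dim(W\cap F)\geq t$ for all $F\in\mathcal{F}$; the $t$-covering number $\tau_t(\mathcal{F})$ is the minimum dimension of a $t$-cover of $\mathcal{F}$. *)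

theory Defs
  imports "HOL-Analysis.Analysis"
begin

text \<open>The ambient space V is the n-dimensional space 'a^'n over a finite field 'a
  (so q = CARD('a) is a prime power and n = CARD('n)).\<close>

definition Gr :: "nat \<Rightarrow> ('a::{field,finite}^'n) set set" where
  "Gr k = {W. vec.subspace W \<and> vec.dim W = k}"

definition almost_t_intersecting :: "nat \<Rightarrow> ('a::{field,finite}^'n) set set \<Rightarrow> bool" where
  "almost_t_intersecting t \<F> \<longleftrightarrow>
     (\<forall>F\<in>\<F>. card {F'\<in>\<F>. vec.dim (F \<inter> F') < t} \<le> 1)"

definition t_cover :: "nat \<Rightarrow> ('a::{field,finite}^'n) set set \<Rightarrow> ('a^'n) set \<Rightarrow> bool" where
  "t_cover t \<F> W \<longleftrightarrow> vec.subspace W \<and> (\<forall>F\<in>\<F>. vec.dim (W \<inter> F) \<ge> t)"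

definition tau :: "nat \<Rightarrow> ('a::{field,finite}^'n) set set \<Rightarrow> nat" where
  "tau t \<F> = (LEAST d. \<exists>W. t_cover t \<F> W \<and> vec.dim W = d)"

end

theory Submission
  imports Defs "HOL-Computational_Algebra.Fraction_Field" "HOL-Computational_Algebra.Polynomial"
begin

(* Every member X of the family has a unique partner pt X with dim (X meet pt X) < t: there is one
   because X, of dimension k < tau_t, is not a t-cover, and at most one because the family is almost
   t-intersecting; all other pairs meet in dimension at least t.  After extending scalars to the
   infinite field F_q(x) and cutting with a generic subspace of codimension t - 1, the members become
   s-dimensional subspaces Q_X, s = k - t + 1, with Q_X meet Q_(pt X) = 0 and Q_X meet Q_Y <> 0 for
   Y <> pt X.  Since pt is an involution, Lovasz's theorem for the pairs (Q_X, Q_(pt X)) gives the bound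
   binom(2s, s).  It is proved by fixing a generic complement L of dimension n - 2s and considering
   the determinants y |-> det (basis of Q_X, y, basis of L) as alternating forms of s vector arguments
   modulo L: they span a space of dimension at most binom(2s, s), since such a form is determined by
   its values on the s-subsets of a basis of a complement of L, and evaluated at bases of the Q_(pt Y)
   they form a diagonal matrix with nonzero diagonal. *)

section \<open>Linear algebra in coordinate spaces\<close>

lemma vec_dim_Un_Int:
  fixes A B :: "('K::field^'n) set"
  shows "vec.dim (A \<union> B) + vec.dim (vec.span A \<inter> vec.span B) = vec.dim A + vec.dim B"
proof -
  have "vec.dim {x + y |x y. x \<in> vec.span A \<and> y \<in> vec.span B} + vec.dim (vec.span A \<inter> vec.span B)
        = vec.dim (vec.span A) + vec.dim (vec.span B)"
    by (rule vec.dim_sums_Int) auto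
  then show ?thesis
    by (simp add: vec.span_Un[symmetric])
qed

lemma vec_dim_Int_ge:
  fixes S T :: "('K::field^'n) set"
  assumes "vec.subspace S" "vec.subspace T"
  shows "vec.dim S + vec.dim T \<le> vec.dim (S \<inter> T) + CARD('n)"
proof -
  have "vec.span S = S" "vec.span T = T"
    using assms by simp_all
  then show ?thesis
    using vec_dim_Un_Int[of S T] dim_subset_UNIV_cart_gen[of "S \<union> T"] by (simp only:)
qed

lemma vec_dim_eq_CARD_iff: "vec.dim (S :: ('K::field^'n) set) = CARD('n) \<longleftrightarrow> vec.span S = UNIV"
  using vec.dim_eq_full[of S] by (simp add: vec.dimension_def card_cart_basis)

lemma vec_subspace_eq_0_iff_dim:
  "vec.subspace S \<Longrightarrow> S = {0} \<longleftrightarrow> vec.dim (S :: ('K::field^'n) set) = 0"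
  using vec.subspace_0 by auto

lemma span_Un_eq_UNIV_iff:
  fixes A B L :: "('K::field^'n) set"
  assumes "vec.subspace A" "vec.subspace B" "vec.subspace L"
    and "vec.dim A + vec.dim B + vec.dim L = CARD('n)"
  shows "vec.span (A \<union> B \<union> L) = UNIV \<longleftrightarrow> A \<inter> B = {0} \<and> vec.span (A \<union> B) \<inter> L = {0}"
proof -
  have span: "vec.span A = A" "vec.span B = B" "vec.span L = L"
    using assms by simp_all
  have "vec.dim (A \<union> B) + vec.dim (A \<inter> B) = vec.dim A + vec.dim B"
    using vec_dim_Un_Int[of A B] span by simp
  moreover have "vec.dim (A \<union> B \<union> L) + vec.dim (vec.span (A \<union> B) \<inter> L) = vec.dim (A \<union> B) + vec.dim L"
    using vec_dim_Un_Int[of "A \<union> B" L] span by simp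
  ultimately have "vec.dim (A \<union> B \<union> L) = CARD('n) \<longleftrightarrow>
      vec.dim (A \<inter> B) = 0 \<and> vec.dim (vec.span (A \<union> B) \<inter> L) = 0"
    using assms(4) by linarith
  then show ?thesis
    using assms by (simp add: vec_dim_eq_CARD_iff vec_subspace_eq_0_iff_dim vec.subspace_inter)
qed

lemma ex_spanning_enumeration:
  fixes S :: "('K::field^'n) set"
  assumes "vec.subspace S" "finite X" "card X = vec.dim S"
  shows "\<exists>f. vec.span (f ` X) = S"
proof -
  obtain B where B: "B \<subseteq> S" "vec.independent B" "S \<subseteq> vec.span B" "card B = vec.dim S"
    using vec.basis_exists by blast
  moreover have "finite B"
    using B(2) vec.finiteI_independent by blast
  ultimately obtain f where "bij_betw f X B"
    using finite_same_card_bij assms(2,3) by metis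
  then have "f ` X = B"
    by (simp add: bij_betw_def)
  moreover have "vec.span B = S"
    using B(1,3) vec.span_minimal[OF B(1) assms(1)] by blast
  ultimately show ?thesis
    by blast
qed

lemma ex_complement_enumeration:
  fixes L :: "('K::field^'n) set"
  assumes "vec.subspace L" "finite J" "vec.dim L + card J = CARD('n)"
  shows "\<exists>u. \<forall>x. \<exists>\<alpha>. x - (\<Sum>j\<in>J. \<alpha> j *s u j) \<in> L"
proof -
  obtain BL where BL: "BL \<subseteq> L" "vec.independent BL" "L \<subseteq> vec.span BL" "card BL = vec.dim L"
    using vec.basis_exists by blast
  obtain C where C: "BL \<subseteq> C" "vec.independent C" "UNIV \<subseteq> vec.span C"
    by (rule vec.maximal_independent_subset_extend[OF subset_UNIV BL(2)]) blast
  have "finite C"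
    using C(2) vec.finiteI_independent by blast
  have "card C = vec.dim (UNIV :: ('K^'n) set)"
    using C by (intro vec.basis_card_eq_dim) simp_all
  then have "card (C - BL) = card J"
    using card_Diff_subset[OF finite_subset[OF C(1) \<open>finite C\<close>] C(1)] BL(4) assms(3)
    by (simp add: card_cart_basis)
  moreover have "finite (C - BL)"
    using \<open>finite C\<close> by simp
  ultimately obtain u where u: "bij_betw u J (C - BL)"
    using finite_same_card_bij[OF assms(2)] by metis
  then have "C - BL = u ` J"
    by (simp add: bij_betw_def)
  have "\<exists>\<alpha>. x - (\<Sum>j\<in>J. \<alpha> j *s u j) \<in> L" for x
  proof -
    have "(C - BL) \<union> BL = C"
      using C(1) by blast
    then have "x \<in> vec.span ((C - BL) \<union> BL)"
      using C(3) by (simp only:) blast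
    then obtain a b where ab: "x = a + b" "a \<in> vec.span (u ` J)" "b \<in> vec.span BL"
      unfolding vec.span_Un \<open>C - BL = u ` J\<close> by blast
    from ab(2) obtain \<gamma> where "a = (\<Sum>v\<in>u ` J. \<gamma> v *s v)"
      unfolding vec.span_finite[OF finite_imageI[OF assms(2)]] by blast
    also have "\<dots> = (\<Sum>j\<in>J. \<gamma> (u j) *s u j)"
      using sum.reindex[of u J "\<lambda>v. \<gamma> v *s v"] u by (simp add: bij_betw_def)
    finally have "x - (\<Sum>j\<in>J. \<gamma> (u j) *s u j) = b"
      using ab(1) by simp
    moreover have "b \<in> L"
      using ab(3) vec.span_minimal[OF BL(1) assms(1)] by blast
    ultimately show ?thesis
      by auto
  qed
  then show ?thesis
    by blast
qed

lemma inj_on_independent_if_lincomb_eq_0: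
  fixes w :: "'i \<Rightarrow> 'K::field^'x"
  assumes "finite I"
    and lincomb: "\<And>\<beta>. (\<Sum>i\<in>I. \<beta> i *s w i) = 0 \<Longrightarrow> \<forall>i\<in>I. \<beta> i = 0"
  shows "inj_on w I" and "vec.independent (w ` I)"
proof -
  show inj: "inj_on w I"
  proof
    fix i j assume ij: "i \<in> I" "j \<in> I" "w i = w j"
    define \<beta> where "\<beta> k = (if k = i then 1 else if k = j then -1 else (0::'K))" for k
    show "i = j"
    proof (rule ccontr)
      assume "i \<noteq> j"
      then have "\<beta> k *s w k = (if k = i then w i else 0) + (if k = j then - w j else 0)" for k
        by (simp add: \<beta>_def)
      then have "(\<Sum>k\<in>I. \<beta> k *s w k) =
          (\<Sum>k\<in>I. if k = i then w i else 0) + (\<Sum>k\<in>I. if k = j then - w j else 0)"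
        by (simp add: sum.distrib)
      also have "\<dots> = 0"
        using ij \<open>finite I\<close> by simp
      finally have "\<beta> i = 0"
        using lincomb[of \<beta>] ij(1) by simp
      then show False
        by (simp add: \<beta>_def)
    qed
  qed
  show "vec.independent (w ` I)"
  proof
    assume "vec.dependent (w ` I)"
    then obtain \<gamma> where "\<exists>v\<in>w ` I. \<gamma> v \<noteq> 0" "(\<Sum>v\<in>w ` I. \<gamma> v *s v) = 0"
      using vec.dependent_finite[of "w ` I"] \<open>finite I\<close> by auto
    moreover have "(\<Sum>v\<in>w ` I. \<gamma> v *s v) = (\<Sum>i\<in>I. \<gamma> (w i) *s w i)"
      using sum.reindex[OF inj, of "\<lambda>v. \<gamma> v *s v"] by simp
    ultimately show False
      using lincomb[of "\<gamma> \<circ> w"] by auto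
  qed
qed

lemma in_span_axis_if_support:
  fixes v :: "'K::field^'x::finite"
  assumes "\<And>x. x \<notin> T \<Longrightarrow> v $ x = 0"
  shows "v \<in> vec.span ((\<lambda>x. axis x 1) ` T)"
proof -
  have "(\<Sum>x\<in>T. v $ x *s axis x 1) $ y = v $ y" for y
  proof -
    have "(\<Sum>x\<in>T. v $ x *s axis x (1::'K)) $ y = (\<Sum>x\<in>T. (v $ x *s axis x 1) $ y)"
      by (rule sum_component)
    also have "\<dots> = (\<Sum>x\<in>T. if x = y then v $ y else 0)"
      by (rule sum.cong) (auto simp: axis_def)
    also have "\<dots> = v $ y"
      using assms[of y] by simp
    finally show ?thesis .
  qed
  then have "v = (\<Sum>x\<in>T. v $ x *s axis x 1)"
    by (simp add: vec_eq_iff)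
  also have "\<dots> \<in> vec.span ((\<lambda>x. axis x 1) ` T)"
    by (intro vec.span_sum vec.span_scale vec.span_base) simp
  finally show ?thesis .
qed

lemma card_le_card_if_independent:
  fixes w :: "'i \<Rightarrow> 'K::field^'x::finite"
  assumes "finite I"
    and lincomb: "\<And>\<beta>. (\<Sum>i\<in>I. \<beta> i *s w i) = 0 \<Longrightarrow> \<forall>i\<in>I. \<beta> i = 0"
    and support: "\<And>i x. i \<in> I \<Longrightarrow> x \<notin> T \<Longrightarrow> w i $ x = 0"
  shows "card I \<le> card T"
proof -
  note independent = inj_on_independent_if_lincomb_eq_0[of I w, OF assms(1) lincomb]
  have "w ` I \<subseteq> vec.span ((\<lambda>x. axis x 1) ` T)"
    using support in_span_axis_if_support by blast
  then have "card (w ` I) \<le> card ((\<lambda>x. axis x (1::'K)) ` T)"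
    using vec.independent_span_bound[of "(\<lambda>x. axis x 1) ` T" "w ` I"] independent(2) by simp
  also have "\<dots> \<le> card T"
    by (rule card_image_le) simp
  finally show ?thesis
    using card_image[OF independent(1)] by simp
qed

lemma card_le_card_if_diagonal:
  fixes G :: "'i \<Rightarrow> 'y \<Rightarrow> 'K::field" and e :: "'x::finite \<Rightarrow> 'y"
  assumes "finite I"
    and determined: "\<And>\<beta> y. (\<And>x. x \<in> T \<Longrightarrow> (\<Sum>i\<in>I. \<beta> i * G i (e x)) = 0) \<Longrightarrow> (\<Sum>i\<in>I. \<beta> i * G i y) = 0"
    and diagonal: "\<And>i j. i \<in> I \<Longrightarrow> j \<in> I \<Longrightarrow> G i (b j) \<noteq> 0 \<longleftrightarrow> i = j"
  shows "card I \<le> card T"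
proof (rule card_le_card_if_independent[OF \<open>finite I\<close>])
  define w where "w i = (\<chi> x. if x \<in> T then G i (e x) else 0)" for i
  show "w i $ x = 0" if "x \<notin> T" for i x
    using that by (simp add: w_def)
  show "\<forall>i\<in>I. \<beta> i = 0" if "(\<Sum>i\<in>I. \<beta> i *s w i) = 0" for \<beta>
  proof
    fix m assume m: "m \<in> I"
    have "(\<Sum>i\<in>I. \<beta> i * G i (e x)) = 0" if "x \<in> T" for x
    proof -
      have "(\<Sum>i\<in>I. \<beta> i *s w i) $ x = 0"
        using \<open>(\<Sum>i\<in>I. \<beta> i *s w i) = 0\<close> by simp
      then show ?thesis
        using that by (simp add: w_def)
    qed
    then have "(\<Sum>i\<in>I. \<beta> i * G i (b m)) = 0"
      by (rule determined)
    moreover have "(\<Sum>i\<in>I. \<beta> i * G i (b m)) = \<beta> m * G m (b m) + (\<Sum>i\<in>I - {m}. \<beta> i * G i (b m))"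
      using \<open>finite I\<close> m by (rule sum.remove)
    moreover have "(\<Sum>i\<in>I - {m}. \<beta> i * G i (b m)) = 0"
      using diagonal m by (intro sum.neutral) auto
    ultimately show "\<beta> m = 0"
      using diagonal[OF m m] by simp
  qed
qed

lemma row_vec_lambda [simp]: "row i (\<chi> r. f r) = f i"
  by (simp add: row_def)

lemma det_ne_0_iff_span_rows: "det A \<noteq> 0 \<longleftrightarrow> vec.span (rows A) = UNIV"
  for A :: "'K::field^'n^'n"
  using invertible_det_nz[of A] invertible_left_inverse[of A] matrix_left_invertible_span_rows_gen[of A]
  by simp

lemma det_ne_0_iff_blocks:
  fixes IA IB :: "'n::finite set" and a b l :: "'n \<Rightarrow> 'K::field^'n"
  assumes "IA \<inter> IB = {}"
    and "vec.subspace A" "vec.subspace B" "vec.subspace L"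
    and span: "vec.span (a ` IA) = A" "vec.span (b ` IB) = B" "vec.span (l ` (- (IA \<union> IB))) = L"
    and "vec.dim A + vec.dim B + vec.dim L = CARD('n)"
  shows "det (\<chi> r. if r \<in> IB then b r else if r \<in> IA then a r else l r) \<noteq> 0 \<longleftrightarrow>
    A \<inter> B = {0} \<and> vec.span (A \<union> B) \<inter> L = {0}"
proof -
  let ?rows = "a ` IA \<union> b ` IB \<union> l ` (- (IA \<union> IB))"
  have "rows (\<chi> r. if r \<in> IB then b r else if r \<in> IA then a r else l r) = ?rows"
    using assms(1) by (auto simp: rows_def)
  moreover have "vec.span ?rows = vec.span (A \<union> B \<union> L)"
  proof (rule vec.span_eq[THEN iffD2, OF conjI])
    have "?rows \<subseteq> A \<union> B \<union> L"
      unfolding span[symmetric] using vec.span_superset[of "a ` IA"] vec.span_superset[of "b ` IB"]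
        vec.span_superset[of "l ` (- (IA \<union> IB))"] by blast
    then show "?rows \<subseteq> vec.span (A \<union> B \<union> L)"
      using vec.span_superset[of "A \<union> B \<union> L"] by (rule order.trans)
    show "A \<union> B \<union> L \<subseteq> vec.span ?rows"
      unfolding span[symmetric] by (intro Un_least vec.span_mono) blast+
  qed
  ultimately show ?thesis
    using span_Un_eq_UNIV_iff[OF assms(2-4,8)] by (simp add: det_ne_0_iff_span_rows)
qed

section \<open>Generic subspaces over an infinite field\<close>

lemma finite_line_Int_subspace:
  fixes a b :: "'K::field^'n"
  assumes T: "vec.subspace T" and ab: "a \<notin> T \<or> b \<notin> T"
  shows "finite {c. a + c *s b \<in> T}"
proof (cases "b \<in> T")
  case True
  then have "a + c *s b \<notin> T" for c
    using ab vec.subspace_diff[OF T, of "a + c *s b" "c *s b"] vec.subspace_scale[OF T] by auto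
  then show ?thesis by simp
next
  case False
  have "c = c'" if "a + c *s b \<in> T" "a + c' *s b \<in> T" for c c'
  proof (rule ccontr)
    assume "c \<noteq> c'"
    have "(a + c *s b) - (a + c' *s b) \<in> T"
      using that T vec.subspace_diff by blast
    also have "(a + c *s b) - (a + c' *s b) = (c - c') *s b"
      by (simp add: vec_eq_iff algebra_simps)
    finally have "inverse (c - c') *s ((c - c') *s b) \<in> T"
      using T vec.subspace_scale by blast
    moreover have "inverse (c - c') *s ((c - c') *s b) = b"
      using \<open>c \<noteq> c'\<close> by (metis vec.scale_scale vec.scale_one left_inverse right_minus_eq)
    ultimately show False
      using False by simp
  qed
  then have "{c. a + c *s b \<in> T} \<subseteq> {SOME c. a + c *s b \<in> T}"
    by (metis (mono_tags, lifting) mem_Collect_eq singletonI someI subsetI)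
  then show ?thesis by (rule finite_subset) simp
qed

lemma ex_avoiding_proper_subspaces:
  fixes SS :: "('K::field^'n) set set"
  assumes "infinite (UNIV :: 'K set)" and "finite SS"
    and "\<And>S. S \<in> SS \<Longrightarrow> vec.subspace S \<and> S \<noteq> UNIV"
  shows "\<exists>v. \<forall>S\<in>SS. v \<notin> S"
  using assms(2,3)
proof (induction SS rule: finite_induct)
  case empty
  then show ?case by simp
next
  case (insert S SS)
  then obtain a where a: "\<forall>T\<in>SS. a \<notin> T" by auto
  obtain b where b: "b \<notin> S" using insert.prems by auto
  have "finite (\<Union>T\<in>insert S SS. {c. a + c *s b \<in> T})"
    using insert a b by (auto intro!: finite_line_Int_subspace)
  then obtain c where "c \<notin> (\<Union>T\<in>insert S SS. {c. a + c *s b \<in> T})"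
    using ex_new_if_finite[OF assms(1)] by blast
  then show ?case by blast
qed

lemma Int_span_insert_eq:
  fixes U L :: "('K::field^'n) set"
  assumes L: "vec.subspace L" and v: "v \<notin> vec.span (U \<union> L)"
  shows "U \<inter> vec.span (insert v L) = U \<inter> L"
proof
  show "U \<inter> vec.span (insert v L) \<subseteq> U \<inter> L"
  proof
    fix x assume x: "x \<in> U \<inter> vec.span (insert v L)"
    moreover have "vec.span L = L"
      using L by simp
    ultimately obtain c where c: "x - c *s v \<in> L"
      unfolding vec.span_insert by auto
    have "c = 0"
    proof (rule ccontr)
      assume "c \<noteq> 0"
      have "x \<in> vec.span (U \<union> L)" "x - c *s v \<in> vec.span (U \<union> L)"
        using x c by (auto intro: vec.span_base)
      then have "x - (x - c *s v) \<in> vec.span (U \<union> L)"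
        by (rule vec.span_diff)
      then have "c *s v \<in> vec.span (U \<union> L)"
        by simp
      then have "inverse c *s (c *s v) \<in> vec.span (U \<union> L)"
        by (rule vec.span_scale)
      moreover have "inverse c *s (c *s v) = v"
        using \<open>c \<noteq> 0\<close> by (metis vec.scale_scale vec.scale_one left_inverse)
      ultimately show False
        using v by simp
    qed
    then show "x \<in> U \<inter> L" using x c by simp
  qed
qed (auto intro: vec.span_base)

lemma generic_subspace_step:
  fixes UU :: "('K::field^'n) set set"
  assumes "infinite (UNIV :: 'K set)" and "finite UU" and "\<And>U. U \<in> UU \<Longrightarrow> vec.subspace U"
    and L: "vec.subspace L" "vec.dim L < CARD('n)"
    and generic: "\<And>U. U \<in> UU \<Longrightarrow> vec.dim (U \<inter> L) \<le> vec.dim U + vec.dim L - CARD('n)"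
  obtains L' where "vec.subspace L'" "vec.dim L' = Suc (vec.dim L)"
    "\<And>U. U \<in> UU \<Longrightarrow> vec.dim (U \<inter> L') \<le> vec.dim U + vec.dim L' - CARD('n)"
proof -
  \<comment> \<open>v avoids every proper span (U \<union> L), so U \<inter> L' = U \<inter> L unless U + L is everything\<close>
  let ?proper = "(\<lambda>U. vec.span (U \<union> L)) ` {U \<in> UU. vec.span (U \<union> L) \<noteq> UNIV}"
  have "L \<noteq> UNIV"
    using L vec_dim_card[where 'a='K and 'n='n] by auto
  then have "\<And>S. S \<in> insert L ?proper \<Longrightarrow> vec.subspace S \<and> S \<noteq> UNIV"
    using L(1) by auto
  moreover have "finite (insert L ?proper)"
    using assms(2) by simp
  ultimately obtain v where v: "\<forall>S\<in>insert L ?proper. v \<notin> S"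
    using ex_avoiding_proper_subspaces[OF assms(1)] by blast
  define L' where "L' = vec.span (insert v L)"
  have "vec.span L = L"
    using L(1) by simp
  have "v \<notin> vec.span L"
    unfolding \<open>vec.span L = L\<close> using v by simp
  then have dim_L': "vec.dim L' = Suc (vec.dim L)"
    unfolding L'_def vec.dim_span vec.dim_insert by simp
  have "vec.dim (U \<inter> L') \<le> vec.dim U + vec.dim L' - CARD('n)" if U: "U \<in> UU" for U
  proof (cases "vec.span (U \<union> L) = UNIV")
    case False
    then have "U \<inter> L' = U \<inter> L"
      using v U L(1) unfolding L'_def by (intro Int_span_insert_eq) auto
    then show ?thesis using generic[OF U] dim_L' by simp
  next
    case True
    have "vec.span (U \<union> L) \<subseteq> vec.span (U \<union> L')"
      by (rule vec.span_mono) (auto simp: L'_def intro: vec.span_base)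
    then have "vec.dim (U \<union> L') = CARD('n)"
      using True by (auto simp: vec_dim_eq_CARD_iff)
    moreover have "vec.span U = U" "vec.span L' = L'"
      using assms(3)[OF U] by (simp_all add: L'_def)
    ultimately show ?thesis
      using vec_dim_Un_Int[of U L'] by (simp only:)
  qed
  then show ?thesis
    using that[of L'] dim_L' by (simp add: L'_def)
qed

lemma ex_generic_subspace:
  fixes UU :: "('K::field^'n) set set"
  assumes "infinite (UNIV :: 'K set)" and "finite UU" and "\<And>U. U \<in> UU \<Longrightarrow> vec.subspace U"
    and "r \<le> CARD('n)"
  obtains L where "vec.subspace L" "vec.dim L = CARD('n) - r"
    "\<And>U. U \<in> UU \<Longrightarrow> vec.dim (U \<inter> L) = vec.dim U - r"
proof -
  have "\<exists>L. vec.subspace L \<and> vec.dim L = j \<and>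
      (\<forall>U\<in>UU. vec.dim (U \<inter> L) \<le> vec.dim U + j - CARD('n))" if "j \<le> CARD('n)" for j
    using that
  proof (induction j)
    case 0
    have dim_Int_0: "vec.dim (U \<inter> {0}) = 0" for U :: "('K^'n) set"
      by simp
    show ?case
      by (intro exI[of _ "{0}"]) (simp add: vec.subspace_0 dim_Int_0)
  next
    case (Suc j)
    then obtain L where L: "vec.subspace L" "vec.dim L = j"
      "\<And>U. U \<in> UU \<Longrightarrow> vec.dim (U \<inter> L) \<le> vec.dim U + vec.dim L - CARD('n)"
      by auto
    moreover have "vec.dim L < CARD('n)"
      using L(2) Suc.prems by simp
    ultimately obtain L' where "vec.subspace L'" "vec.dim L' = Suc (vec.dim L)"
      "\<And>U. U \<in> UU \<Longrightarrow> vec.dim (U \<inter> L') \<le> vec.dim U + vec.dim L' - CARD('n)"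
      using generic_subspace_step[OF assms(1-3)] by blast
    then show ?case
      using L(2) by auto
  qed
  from this[of "CARD('n) - r"] obtain L where L: "vec.subspace L" "vec.dim L = CARD('n) - r"
    and le: "\<And>U. U \<in> UU \<Longrightarrow> vec.dim (U \<inter> L) \<le> vec.dim U + (CARD('n) - r) - CARD('n)"
    by auto
  have "vec.dim (U \<inter> L) = vec.dim U - r" if "U \<in> UU" for U
    using le[OF that] vec_dim_Int_ge[OF assms(3)[OF that] L(1)] L(2) assms(4) by linarith
  with L show ?thesis
    by (rule that)
qed

section \<open>Alternating forms modulo a subspace\<close>

locale alternating_form =
  fixes C :: "'i set" and L :: "('K::field^'m) set" and h :: "('i \<Rightarrow> 'K^'m) \<Rightarrow> 'K"
  assumes depends_on_C: "(\<And>c. c \<in> C \<Longrightarrow> y c = y' c) \<Longrightarrow> h y = h y'"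
    and additive: "c \<in> C \<Longrightarrow> h (y(c := a + b)) = h (y(c := a)) + h (y(c := b))"
    and homogeneous: "c \<in> C \<Longrightarrow> h (y(c := \<alpha> *s a)) = \<alpha> * h (y(c := a))"
    and invariant_mod_L: "c \<in> C \<Longrightarrow> l \<in> L \<Longrightarrow> h (y(c := a + l)) = h (y(c := a))"
    and eq_0_if_repeated: "c \<in> C \<Longrightarrow> c' \<in> C \<Longrightarrow> c \<noteq> c' \<Longrightarrow> y c = y c' \<Longrightarrow> h y = 0"
    and permute: "p permutes C \<Longrightarrow> h (y \<circ> p) = of_int (sign p) * h y"
begin

lemma update_lincomb:
  assumes "c \<in> C"
  shows "h (y(c := \<Sum>j\<in>A. \<alpha> j *s f j)) = (\<Sum>j\<in>A. \<alpha> j * h (y(c := f j)))"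
proof -
  have zero: "h (y(c := 0)) = 0"
    using homogeneous[OF assms, of y 0 0] by simp
  show ?thesis
  proof (induction A rule: infinite_finite_induct)
    case (infinite A)
    then have "(\<Sum>j\<in>A. \<alpha> j *s f j) = 0" "(\<Sum>j\<in>A. \<alpha> j * h (y(c := f j))) = 0"
      by simp_all
    then show ?case
      using zero by (simp only:)
  next
    case empty
    then show ?case
      using zero by (simp only: sum.empty)
  next
    case (insert j A)
    have "h (y(c := \<Sum>j\<in>insert j A. \<alpha> j *s f j)) = h (y(c := \<alpha> j *s f j + (\<Sum>j\<in>A. \<alpha> j *s f j)))"
      using insert.hyps by simp
    also have "\<dots> = \<alpha> j * h (y(c := f j)) + (\<Sum>j\<in>A. \<alpha> j * h (y(c := f j)))"
      using insert.IH by (simp only: additive[OF assms] homogeneous[OF assms])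
    also have "\<dots> = (\<Sum>j\<in>insert j A. \<alpha> j * h (y(c := f j)))"
      using insert.hyps by simp
    finally show ?case .
  qed
qed

lemma eq_0_if_values_in_image:
  assumes vanish: "\<And>S. S \<subseteq> J \<Longrightarrow> card S = card C \<Longrightarrow> \<exists>f. bij_betw f C S \<and> h (u \<circ> f) = 0"
    and y: "\<And>c. c \<in> C \<Longrightarrow> y c \<in> u ` J"
  shows "h y = 0"
proof -
  have "\<forall>c\<in>C. \<exists>j. j \<in> J \<and> y c = u j"
    using y by blast
  then obtain i where i: "\<And>c. c \<in> C \<Longrightarrow> i c \<in> J \<and> y c = u (i c)"
    by metis
  show ?thesis
  proof (cases "inj_on i C")
    case False
    then obtain c c' where "c \<in> C" "c' \<in> C" "c \<noteq> c'" "i c = i c'"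
      unfolding inj_on_def by blast
    then show ?thesis
      using eq_0_if_repeated i by metis
  next
    case True
    then obtain f where f: "bij_betw f C (i ` C)" "h (u \<circ> f) = 0"
      using vanish[of "i ` C"] i card_image by blast
    define p where "p c = (if c \<in> C then inv_into C f (i c) else c)" for c
    have "bij_betw i C (i ` C)"
      using True by (simp add: bij_betw_def)
    then have "bij_betw (inv_into C f \<circ> i) C C"
      using bij_betw_trans bij_betw_inv_into[OF f(1)] by blast
    then have "bij_betw p C C"
      by (rule bij_betw_cong[THEN iffD1, rotated]) (simp add: p_def)
    then have p: "p permutes C"
      by (rule bij_imp_permutes) (simp add: p_def)
    have "f (p c) = i c" if "c \<in> C" for c
      using that f(1) by (simp add: p_def bij_betw_def f_inv_into_f)
    then have "h y = h ((u \<circ> f) \<circ> p)"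
      using i by (intro depends_on_C) simp
    also have "\<dots> = 0"
      using permute[OF p] f(2) by simp
    finally show ?thesis .
  qed
qed

lemma eq_0_if_vanishes_on_subsets:
  assumes "finite C"
    and spans: "\<And>x. \<exists>\<alpha>. x - (\<Sum>j\<in>J. \<alpha> j *s u j) \<in> L"
    and vanish: "\<And>S. S \<subseteq> J \<Longrightarrow> card S = card C \<Longrightarrow> \<exists>f. bij_betw f C S \<and> h (u \<circ> f) = 0"
  shows "h y = 0"
proof -
  have "h y = 0" if "finite D" "\<And>c. c \<in> C - D \<Longrightarrow> y c \<in> u ` J" for D y
    using that
  proof (induction D arbitrary: y rule: finite_induct)
    case empty
    then show ?case
      using eq_0_if_values_in_image[OF vanish] by simp
  next
    case (insert d D)
    show ?case
    proof (cases "d \<in> C")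
      case False
      then show ?thesis
        using insert by auto
    next
      case True
      obtain \<alpha> where "y d - (\<Sum>j\<in>J. \<alpha> j *s u j) \<in> L"
        using spans by blast
      then have "h y = h (y(d := \<Sum>j\<in>J. \<alpha> j *s u j))"
        using invariant_mod_L[OF True, of "y d - (\<Sum>j\<in>J. \<alpha> j *s u j)" y "\<Sum>j\<in>J. \<alpha> j *s u j"]
        by simp
      also have "\<dots> = (\<Sum>j\<in>J. \<alpha> j * h (y(d := u j)))"
        using True by (rule update_lincomb)
      also have "\<dots> = 0"
        using insert by (intro sum.neutral) auto
      finally show ?thesis .
    qed
  qed
  then show ?thesis
    using assms(1) by blast
qed

end

lemma alternating_form_lincomb:
  fixes G :: "'j \<Rightarrow> ('i \<Rightarrow> 'K::field^'m) \<Rightarrow> 'K"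
  assumes "\<And>i. i \<in> I \<Longrightarrow> alternating_form C L (G i)"
  shows "alternating_form C L (\<lambda>y. \<Sum>i\<in>I. \<beta> i * G i y)"
proof
  fix y y' :: "'i \<Rightarrow> 'K^'m" and c c' :: 'i and a b l :: "'K^'m" and \<alpha> :: 'K and p :: "'i \<Rightarrow> 'i"
  show "(\<Sum>i\<in>I. \<beta> i * G i y) = (\<Sum>i\<in>I. \<beta> i * G i y')" if "\<And>c. c \<in> C \<Longrightarrow> y c = y' c"
    using alternating_form.depends_on_C[OF assms that] by simp
  show "c \<in> C \<Longrightarrow> (\<Sum>i\<in>I. \<beta> i * G i (y(c := a + b))) =
      (\<Sum>i\<in>I. \<beta> i * G i (y(c := a))) + (\<Sum>i\<in>I. \<beta> i * G i (y(c := b)))"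
    by (simp add: alternating_form.additive[OF assms] distrib_left sum.distrib cong: sum.cong)
  show "c \<in> C \<Longrightarrow> (\<Sum>i\<in>I. \<beta> i * G i (y(c := \<alpha> *s a))) = \<alpha> * (\<Sum>i\<in>I. \<beta> i * G i (y(c := a)))"
    by (simp add: alternating_form.homogeneous[OF assms] sum_distrib_left mult.left_commute
        cong: sum.cong)
  show "c \<in> C \<Longrightarrow> l \<in> L \<Longrightarrow>
      (\<Sum>i\<in>I. \<beta> i * G i (y(c := a + l))) = (\<Sum>i\<in>I. \<beta> i * G i (y(c := a)))"
    by (simp add: alternating_form.invariant_mod_L[OF assms] cong: sum.cong)
  show "c \<in> C \<Longrightarrow> c' \<in> C \<Longrightarrow> c \<noteq> c' \<Longrightarrow> y c = y c' \<Longrightarrow> (\<Sum>i\<in>I. \<beta> i * G i y) = 0"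
    by (simp add: alternating_form.eq_0_if_repeated[OF assms])
  show "p permutes C \<Longrightarrow>
      (\<Sum>i\<in>I. \<beta> i * G i (y \<circ> p)) = of_int (sign p) * (\<Sum>i\<in>I. \<beta> i * G i y)"
    by (simp add: alternating_form.permute[OF assms] sum_distrib_left mult.left_commute
        cong: sum.cong)
qed

lemma alternating_form_det:
  fixes C :: "'n::finite set" and z :: "'n \<Rightarrow> 'K::field^'n"
  assumes "L \<subseteq> vec.span (z ` (- C))"
  shows "alternating_form C L (\<lambda>y. det (\<chi> r. if r \<in> C then y r else z r))"
proof
  let ?M = "\<lambda>y. \<chi> r. if r \<in> C then y r else z r"
  have update: "?M (y(c := v)) = (\<chi> r. if r = c then v else ?M y $ r)" if "c \<in> C" for y c v
    using that by (simp add: vec_eq_iff)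
  fix y y' :: "'n \<Rightarrow> 'K^'n" and c c' :: 'n and a b l :: "'K^'n" and \<alpha> :: 'K and p :: "'n \<Rightarrow> 'n"
  show "det (?M y) = det (?M y')" if "\<And>c. c \<in> C \<Longrightarrow> y c = y' c"
  proof -
    have "?M y = ?M y'"
      unfolding vec_eq_iff using that by simp
    then show ?thesis by simp
  qed
  show "c \<in> C \<Longrightarrow> det (?M (y(c := a + b))) = det (?M (y(c := a))) + det (?M (y(c := b)))"
    unfolding update using det_row_add[of c "\<lambda>_. a" "\<lambda>_. b" "\<lambda>r. ?M y $ r"] by simp
  show "c \<in> C \<Longrightarrow> det (?M (y(c := \<alpha> *s a))) = \<alpha> * det (?M (y(c := a)))"
    unfolding update using det_row_mul[of c \<alpha> "\<lambda>_. a" "\<lambda>r. ?M y $ r"] by simp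
  show "det (?M (y(c := a + l))) = det (?M (y(c := a)))" if c: "c \<in> C" and l: "l \<in> L"
  proof -
    let ?A = "?M (y(c := a))"
    have "z j = row j ?A" if "j \<notin> C" for j
      using that by simp
    then have "z ` (- C) \<subseteq> {row j ?A |j. j \<noteq> c}"
      using c by blast
    then have "l \<in> vec.span {row j ?A |j. j \<noteq> c}"
      using l assms vec.span_mono by blast
    then have "det (\<chi> k. if k = c then row c ?A + l else row k ?A) = det ?A"
      by (rule det_row_span)
    moreover have "(\<chi> k. if k = c then row c ?A + l else row k ?A) = ?M (y(c := a + l))"
      using c by (simp add: vec_eq_iff)
    ultimately show ?thesis
      by simp
  qed
  show "c \<in> C \<Longrightarrow> c' \<in> C \<Longrightarrow> c \<noteq> c' \<Longrightarrow> y c = y c' \<Longrightarrow> det (?M y) = 0"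
    by (rule det_identical_rows[of c c']) simp_all
  show "det (?M (y \<circ> p)) = of_int (sign p) * det (?M y)" if p: "p permutes C"
  proof -
    have "(if r \<in> C then (y \<circ> p) r else z r) = (if p r \<in> C then y (p r) else z (p r))" for r
      using p permutes_in_image[OF p] permutes_not_in[OF p] by (cases "r \<in> C") simp_all
    then have "?M (y \<circ> p) = (\<chi> r. ?M y $ p r)"
      by simp
    then have "det (?M (y \<circ> p)) = det (\<chi> r. ?M y $ p r)"
      by (simp only:)
    also have "\<dots> = of_int (sign p) * det (?M y)"
      by (rule det_permute_rows[OF permutes_subset[OF p subset_UNIV]])
    finally show ?thesis .
  qed
qed

lemma card_le_choose_if_diagonal_alternating:
  fixes G :: "'i \<Rightarrow> ('c \<Rightarrow> 'K::field^'m) \<Rightarrow> 'K" and u :: "'j::finite \<Rightarrow> 'K^'m"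
  assumes "finite I" and "finite C"
    and alternating: "\<And>i. i \<in> I \<Longrightarrow> alternating_form C L (G i)"
    and spans: "\<And>x. \<exists>\<alpha>. x - (\<Sum>j\<in>J. \<alpha> j *s u j) \<in> L"
    and diagonal: "\<And>i j. i \<in> I \<Longrightarrow> j \<in> I \<Longrightarrow> G i (b j) \<noteq> 0 \<longleftrightarrow> i = j"
  shows "card I \<le> card J choose card C"
proof -
  define T where "T = {S. S \<subseteq> J \<and> card S = card C}"
  have "\<exists>f. bij_betw f C S" if "S \<in> T" for S
    using finite_same_card_bij[of C S] that \<open>finite C\<close> by (simp add: T_def)
  then obtain \<sigma> where \<sigma>: "\<And>S. S \<in> T \<Longrightarrow> bij_betw (\<sigma> S) C S"
    by metis
  \<comment> \<open>a linear combination of the G i, being alternating modulo L, is determined by its values at the u \<circ> \<sigma> S\<close>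
  have "card I \<le> card T"
  proof (rule card_le_card_if_diagonal[where G = G and e = "\<lambda>S. u \<circ> \<sigma> S" and b = b])
    show "(\<Sum>i\<in>I. \<beta> i * G i y) = 0"
      if vanish: "\<And>S. S \<in> T \<Longrightarrow> (\<Sum>i\<in>I. \<beta> i * G i (u \<circ> \<sigma> S)) = 0" for \<beta> y
    proof -
      interpret alternating_form C L "\<lambda>y. \<Sum>i\<in>I. \<beta> i * G i y"
        by (rule alternating_form_lincomb) (rule alternating)
      show ?thesis
      proof (rule eq_0_if_vanishes_on_subsets[OF \<open>finite C\<close> spans])
        show "\<exists>f. bij_betw f C S \<and> (\<Sum>i\<in>I. \<beta> i * G i (u \<circ> f)) = 0"
          if "S \<subseteq> J" "card S = card C" for S
        proof -
          have "S \<in> T"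
            using that by (simp add: T_def)
          then show ?thesis
            using \<sigma> vanish by blast
        qed
      qed
    qed
  qed (use \<open>finite I\<close> diagonal in simp_all)
  also have "card T = card J choose card C"
    using n_subsets[of J "card C"] by (simp add: T_def)
  finally show ?thesis .
qed

section \<open>Lovasz's bound for cross-intersecting pairs of subspaces\<close>

lemma card_le_choose_if_cross_intersecting_complement:
  fixes A B :: "'i \<Rightarrow> ('K::field^'n) set" and L :: "('K^'n) set"
  assumes "finite I"
    and subspaces: "\<And>i. i \<in> I \<Longrightarrow> vec.subspace (A i) \<and> vec.subspace (B i)"
    and dims: "\<And>i. i \<in> I \<Longrightarrow> vec.dim (A i) = s \<and> vec.dim (B i) = s"
    and L: "vec.subspace L" "vec.dim L + 2 * s = CARD('n)"
    and disjoint: "\<And>i. i \<in> I \<Longrightarrow> A i \<inter> B i = {0} \<and> vec.span (A i \<union> B i) \<inter> L = {0}"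
    and cross: "\<And>i j. i \<in> I \<Longrightarrow> j \<in> I \<Longrightarrow> i \<noteq> j \<Longrightarrow> A i \<inter> B j \<noteq> {0}"
  shows "card I \<le> (2 * s) choose s"
proof -
  obtain J :: "'n set" where J: "card J = 2 * s"
    using obtain_subset_with_card_n[of "2 * s" "UNIV :: 'n set"] L(2) by auto
  obtain IA where IA: "IA \<subseteq> J" "card IA = s"
    using obtain_subset_with_card_n[of s J] J by auto
  define IB where "IB = J - IA"
  have "card IB = s"
    using IA J by (simp add: IB_def card_Diff_subset)
  have "IA \<inter> IB = {}" "- (IA \<union> IB) = - J"
    using IA(1) by (auto simp: IB_def)
  have "card (- J) = vec.dim L"
    using J L(2) card_Diff_subset[of J UNIV] by (simp add: Compl_eq_Diff_UNIV)
  then obtain l where l: "vec.span (l ` (- J)) = L"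
    using ex_spanning_enumeration[OF L(1) finite] by blast
  have l': "vec.span (l ` (- (IA \<union> IB))) = L"
    using l \<open>- (IA \<union> IB) = - J\<close> by (simp only:)
  have "vec.dim L + card J = CARD('n)"
    using J L(2) by simp
  then obtain u where u: "\<And>x. \<exists>\<alpha>. x - (\<Sum>j\<in>J. \<alpha> j *s u j) \<in> L"
    using ex_complement_enumeration[OF L(1) finite] by blast
  have "\<exists>f. vec.span (f ` IA) = A i" if "i \<in> I" for i
    using ex_spanning_enumeration[of "A i" IA] subspaces[OF that] dims[OF that] IA(2) by simp
  then obtain a where a: "\<And>i. i \<in> I \<Longrightarrow> vec.span (a i ` IA) = A i"
    by metis
  have "\<exists>f. vec.span (f ` IB) = B i" if "i \<in> I" for i
    using ex_spanning_enumeration[of "B i" IB] subspaces[OF that] dims[OF that] \<open>card IB = s\<close> by simp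
  then obtain b where b: "\<And>i. i \<in> I \<Longrightarrow> vec.span (b i ` IB) = B i"
    by metis
  \<comment> \<open>rows in IA span A i, rows outside IA \<union> IB span L, the rows in IB are the variables\<close>
  define G where "G i y = det (\<chi> r. if r \<in> IB then y r else if r \<in> IA then a i r else l r)" for i y
  have alternating: "alternating_form IB L (G i)" for i
    unfolding G_def
  proof (rule alternating_form_det)
    have "l ` (- J) \<subseteq> (\<lambda>r. if r \<in> IA then a i r else l r) ` (- IB)"
      using IA(1) by (force simp: IB_def)
    then show "L \<subseteq> vec.span ((\<lambda>r. if r \<in> IA then a i r else l r) ` (- IB))"
      unfolding l[symmetric] by (rule vec.span_mono)
  qed
  have diagonal: "G i (b j) \<noteq> 0 \<longleftrightarrow> i = j" if "i \<in> I" "j \<in> I" for i j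
  proof -
    have "G i (b j) \<noteq> 0 \<longleftrightarrow> A i \<inter> B j = {0} \<and> vec.span (A i \<union> B j) \<inter> L = {0}"
      unfolding G_def
      by (rule det_ne_0_iff_blocks[OF \<open>IA \<inter> IB = {}\<close> _ _ L(1) a[OF that(1)] b[OF that(2)] l'])
        (use subspaces that dims L(2) in simp_all)
    then show ?thesis
      using disjoint[OF that(1)] cross[OF that] by (cases "i = j") simp_all
  qed
  have "card I \<le> card J choose card IB"
    using \<open>finite I\<close> finite alternating u diagonal by (rule card_le_choose_if_diagonal_alternating)
  then show ?thesis
    using J \<open>card IB = s\<close> by simp
qed

lemma card_le_choose_if_cross_intersecting:
  fixes A B :: "'i \<Rightarrow> ('K::field^'n) set"
  assumes "infinite (UNIV :: 'K set)" and "finite I"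
    and subspaces: "\<And>i. i \<in> I \<Longrightarrow> vec.subspace (A i) \<and> vec.subspace (B i)"
    and dims: "\<And>i. i \<in> I \<Longrightarrow> vec.dim (A i) = s \<and> vec.dim (B i) = s"
    and disjoint: "\<And>i. i \<in> I \<Longrightarrow> A i \<inter> B i = {0}"
    and cross: "\<And>i j. i \<in> I \<Longrightarrow> j \<in> I \<Longrightarrow> i \<noteq> j \<Longrightarrow> A i \<inter> B j \<noteq> {0}"
    and "2 * s \<le> CARD('n)"
  shows "card I \<le> (2 * s) choose s"
proof -
  let ?UU = "(\<lambda>i. vec.span (A i \<union> B i)) ` I"
  obtain L where L: "vec.subspace L" "vec.dim L = CARD('n) - 2 * s"
    and generic: "\<And>U. U \<in> ?UU \<Longrightarrow> vec.dim (U \<inter> L) = vec.dim U - 2 * s"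
    by (rule ex_generic_subspace[OF assms(1) finite_imageI[OF assms(2), of "\<lambda>i. vec.span (A i \<union> B i)"]
          _ assms(7)]) auto
  show ?thesis
  proof (rule card_le_choose_if_cross_intersecting_complement[OF assms(2) subspaces dims L(1) _ _ cross])
    show "vec.dim L + 2 * s = CARD('n)"
      using L(2) assms(7) by simp
    show "A i \<inter> B i = {0} \<and> vec.span (A i \<union> B i) \<inter> L = {0}" if "i \<in> I" for i
    proof
      have "vec.span (A i) = A i" "vec.span (B i) = B i"
        using subspaces[OF that] by simp_all
      then have "vec.dim (A i \<union> B i) + vec.dim (A i \<inter> B i) = vec.dim (A i) + vec.dim (B i)"
        using vec_dim_Un_Int[of "A i" "B i"] by (simp only:)
      then have "vec.dim (A i \<union> B i) = 2 * s"
        using dims[OF that] disjoint[OF that] by simp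
      then have "vec.dim (vec.span (A i \<union> B i) \<inter> L) = 0"
        using generic[of "vec.span (A i \<union> B i)"] that by simp
      then show "vec.span (A i \<union> B i) \<inter> L = {0}"
        using L(1) by (simp add: vec_subspace_eq_0_iff_dim vec.subspace_inter)
    qed (rule disjoint[OF that])
  qed
qed

lemma card_le_choose_if_unique_partner_infinite:
  fixes P :: "'i \<Rightarrow> ('K::field^'n) set" and pt :: "'i \<Rightarrow> 'i"
  assumes "infinite (UNIV :: 'K set)" and "finite I"
    and subspaces: "\<And>i. i \<in> I \<Longrightarrow> vec.subspace (P i)"
    and dims: "\<And>i. i \<in> I \<Longrightarrow> vec.dim (P i) = k"
    and pt: "\<And>i. i \<in> I \<Longrightarrow> pt i \<in> I"
    and small: "\<And>i. i \<in> I \<Longrightarrow> vec.dim (P i \<inter> P (pt i)) < t"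
    and large: "\<And>i j. i \<in> I \<Longrightarrow> j \<in> I \<Longrightarrow> j \<noteq> pt i \<Longrightarrow> t \<le> vec.dim (P i \<inter> P j)"
    and "0 < t" "t \<le> k" "2 * k \<le> CARD('n)"
  shows "card I \<le> (2 * (k - t + 1)) choose (k - t + 1)"
proof -
  let ?UU = "(\<lambda>(i, j). P i \<inter> P j) ` (I \<times> I)"
  have "finite ?UU"
    using assms(2) by simp
  moreover have "\<And>U. U \<in> ?UU \<Longrightarrow> vec.subspace U"
    using subspaces by (auto intro: vec.subspace_inter)
  moreover have "t - 1 \<le> CARD('n)"
    using assms(9,10) by simp
  ultimately obtain W where W: "vec.subspace W"
    and generic: "\<And>U. U \<in> ?UU \<Longrightarrow> vec.dim (U \<inter> W) = vec.dim U - (t - 1)"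
    by (rule ex_generic_subspace[OF assms(1)]) auto
  define Q where "Q i = P i \<inter> W" for i
  have Q_Int_subspace: "vec.subspace (Q i \<inter> Q j)" if "i \<in> I" "j \<in> I" for i j
    unfolding Q_def using subspaces that W by (intro vec.subspace_inter) auto
  have Q_Int: "vec.dim (Q i \<inter> Q j) = vec.dim (P i \<inter> P j) - (t - 1)" if "i \<in> I" "j \<in> I" for i j
  proof -
    have "P i \<inter> P j \<in> ?UU"
      using that by (intro image_eqI[where x = "(i, j)"]) auto
    moreover have "Q i \<inter> Q j = (P i \<inter> P j) \<inter> W"
      by (auto simp: Q_def)
    ultimately show ?thesis
      using generic by simp
  qed
  have pt_inj: "i = j" if "i \<in> I" "j \<in> I" "pt i = pt j" for i j
  proof -
    have "pt (pt i) = i" if "i \<in> I" for i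
      using large[OF pt[OF that] that] small[OF that] by (metis Int_commute not_le)
    then show ?thesis
      using that by metis
  qed
  show ?thesis
  proof (rule card_le_choose_if_cross_intersecting[where A = Q and B = "Q \<circ> pt", OF assms(1,2)])
    show "vec.subspace (Q i) \<and> vec.subspace ((Q \<circ> pt) i)" if "i \<in> I" for i
      using Q_Int_subspace[of i i] Q_Int_subspace[of "pt i" "pt i"] pt that by simp
    show "vec.dim (Q i) = k - t + 1 \<and> vec.dim ((Q \<circ> pt) i) = k - t + 1" if "i \<in> I" for i
      using Q_Int[of i i] Q_Int[of "pt i" "pt i"] dims pt that assms(8,9) by simp
    show "Q i \<inter> (Q \<circ> pt) i = {0}" if "i \<in> I" for i
      using Q_Int[of i "pt i"] Q_Int_subspace[of i "pt i"] small[OF that] pt that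
      by (simp add: vec_subspace_eq_0_iff_dim)
    show "Q i \<inter> (Q \<circ> pt) j \<noteq> {0}" if "i \<in> I" "j \<in> I" "i \<noteq> j" for i j
    proof -
      have "pt j \<noteq> pt i"
        using pt_inj that by metis
      then show ?thesis
        using Q_Int[of i "pt j"] Q_Int_subspace[of i "pt j"] large[of i "pt j"] pt that assms(8)
        by (simp add: vec_subspace_eq_0_iff_dim)
    qed
    show "2 * (k - t + 1) \<le> CARD('n)"
      using assms(8-10) by simp
  qed
qed

section \<open>Extension of scalars to the rational function field\<close>

definition to_ratfun :: "'a::field \<Rightarrow> 'a poly fract" where
  "to_ratfun c = Fract [:c:] 1"

lemma to_ratfun_add: "to_ratfun (a + b) = to_ratfun a + to_ratfun b"
  by (simp add: to_ratfun_def)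

lemma to_ratfun_mult: "to_ratfun (a * b) = to_ratfun a * to_ratfun b"
  by (simp add: to_ratfun_def mult.commute)

lemma to_ratfun_0 [simp]: "to_ratfun 0 = 0"
  by (simp add: to_ratfun_def Zero_fract_def)

lemma to_ratfun_1 [simp]: "to_ratfun 1 = 1"
  by (simp add: to_ratfun_def One_fract_def one_pCons)

lemma to_ratfun_uminus: "to_ratfun (- a) = - to_ratfun a"
  by (simp add: to_ratfun_def)

lemma to_ratfun_eq_iff [simp]: "to_ratfun a = to_ratfun b \<longleftrightarrow> a = b"
  by (simp add: to_ratfun_def eq_fract)

lemma to_ratfun_sum: "to_ratfun (sum f A) = (\<Sum>a\<in>A. to_ratfun (f a))"
  by (induction A rule: infinite_finite_induct) (simp_all add: to_ratfun_add)

lemma to_ratfun_prod: "to_ratfun (prod f A) = (\<Prod>a\<in>A. to_ratfun (f a))"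
  by (induction A rule: infinite_finite_induct) (simp_all add: to_ratfun_mult)

lemma infinite_UNIV_ratfun: "infinite (UNIV :: 'a::field poly fract set)"
proof -
  have "inj (\<lambda>n::nat. Fract (monom (1::'a) n) 1)"
    by (rule injI) (simp add: eq_fract monom_eq_iff')
  then show ?thesis
    by (rule infinite_super[OF subset_UNIV range_inj_infinite])
qed

lemma det_to_ratfun: "det (\<chi> i j. to_ratfun (A $ i $ j)) = to_ratfun (det (A :: 'a::field^'n^'n))"
proof -
  have "to_ratfun (of_int (sign p) :: 'a) = of_int (sign p)" for p :: "'n \<Rightarrow> 'n"
    by (simp add: sign_def to_ratfun_uminus)
  then show ?thesis
    unfolding det_def by (simp add: to_ratfun_sum to_ratfun_mult to_ratfun_prod)
qed

definition vec_to_ratfun :: "'a::field^'n \<Rightarrow> 'a poly fract^'n" where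
  "vec_to_ratfun v = (\<chi> i. to_ratfun (v $ i))"

lemma vec_to_ratfun_sum_scale:
  "vec_to_ratfun (\<Sum>b\<in>B. c b *s b) = (\<Sum>b\<in>B. to_ratfun (c b) *s vec_to_ratfun b)"
  by (simp add: vec_to_ratfun_def vec_eq_iff to_ratfun_sum to_ratfun_mult)

lemma inj_vec_to_ratfun: "inj vec_to_ratfun"
  by (rule injI) (simp add: vec_to_ratfun_def vec_eq_iff)

lemma independent_vec_to_ratfun_image:
  assumes "vec.independent (B :: ('a::field^'n) set)"
  shows "vec.independent (vec_to_ratfun ` B)"
proof -
  \<comment> \<open>extend B to a basis C; the matrix with rows C has nonzero determinant over either field\<close>
  obtain C where C: "B \<subseteq> C" "vec.independent C" "UNIV \<subseteq> vec.span C"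
    by (rule vec.maximal_independent_subset_extend[OF subset_UNIV assms]) blast
  have "finite C"
    using C(2) vec.finiteI_independent by blast
  have "card C = CARD('n)"
    using C by (simp add: vec.basis_card_eq_dim[of C UNIV] card_cart_basis)
  then obtain e where e: "bij_betw e (UNIV :: 'n set) C"
    using finite_same_card_bij[of "UNIV :: 'n set" C] \<open>finite C\<close> by auto
  then have "range e = C"
    by (simp add: bij_betw_def)
  define M where "M = (\<chi> i. e i)"
  have "rows M = C"
    using \<open>range e = C\<close> by (auto simp: rows_def M_def)
  then have "det M \<noteq> 0"
    using C(3) by (simp add: det_ne_0_iff_span_rows top_le)
  then have "det (\<chi> i j. to_ratfun (M $ i $ j)) \<noteq> 0"
    using to_ratfun_eq_iff[of "det M" 0] by (simp add: det_to_ratfun)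
  moreover have "rows (\<chi> i j. to_ratfun (M $ i $ j)) = vec_to_ratfun ` C"
    using \<open>range e = C\<close> by (auto simp: rows_def M_def vec_to_ratfun_def)
  ultimately have span: "vec.span (vec_to_ratfun ` C) = UNIV"
    by (simp add: det_ne_0_iff_span_rows)
  have "card (vec_to_ratfun ` C) = card C"
    using inj_on_subset[OF inj_vec_to_ratfun subset_UNIV] by (rule card_image)
  then have "vec.independent (vec_to_ratfun ` C)"
    using vec.card_eq_dim[of "vec_to_ratfun ` C" UNIV] \<open>finite C\<close> span \<open>card C = CARD('n)\<close>
    by (simp add: card_cart_basis)
  then show ?thesis
    using C(1) vec.independent_mono by blast
qed

lemma dim_vec_to_ratfun_image: "vec.dim (vec_to_ratfun ` S) = vec.dim (S :: ('a::field^'n) set)"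
proof -
  obtain B where B: "B \<subseteq> S" "vec.independent B" "S \<subseteq> vec.span B" "card B = vec.dim S"
    using vec.basis_exists by blast
  have "vec_to_ratfun ` S \<subseteq> vec.span (vec_to_ratfun ` B)"
  proof
    fix y assume "y \<in> vec_to_ratfun ` S"
    then obtain x where "x \<in> S" "y = vec_to_ratfun x"
      by blast
    moreover obtain c where "x = (\<Sum>b\<in>B. c b *s b)"
      using \<open>x \<in> S\<close> B(2,3) vec.span_finite[OF vec.finiteI_independent] by blast
    ultimately have "y = (\<Sum>b\<in>B. to_ratfun (c b) *s vec_to_ratfun b)"
      by (simp add: vec_to_ratfun_sum_scale)
    also have "\<dots> \<in> vec.span (vec_to_ratfun ` B)"
      by (intro vec.span_sum vec.span_scale vec.span_base) simp
    finally show "y \<in> vec.span (vec_to_ratfun ` B)" .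
  qed
  then have "card (vec_to_ratfun ` B) = vec.dim (vec_to_ratfun ` S)"
    using B(1) independent_vec_to_ratfun_image[OF B(2)] by (intro vec.basis_card_eq_dim) auto
  moreover have "card (vec_to_ratfun ` B) = card B"
    using inj_on_subset[OF inj_vec_to_ratfun subset_UNIV] by (rule card_image)
  ultimately show ?thesis
    using B(4) by simp
qed

lemma dim_span_vec_to_ratfun_Int:
  fixes X Y :: "('a::field^'n) set"
  assumes "vec.subspace X" "vec.subspace Y"
  shows "vec.dim (vec.span (vec_to_ratfun ` X) \<inter> vec.span (vec_to_ratfun ` Y)) = vec.dim (X \<inter> Y)"
proof -
  have "vec.span X = X" "vec.span Y = Y"
    using assms by simp_all
  then have "vec.dim (X \<union> Y) + vec.dim (X \<inter> Y) = vec.dim X + vec.dim Y"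
    using vec_dim_Un_Int[of X Y] by (simp only:)
  moreover have "vec.dim (X \<union> Y) + vec.dim (vec.span (vec_to_ratfun ` X) \<inter> vec.span (vec_to_ratfun ` Y))
      = vec.dim X + vec.dim Y"
    using vec_dim_Un_Int[of "vec_to_ratfun ` X" "vec_to_ratfun ` Y"]
    by (simp add: image_Un[symmetric] dim_vec_to_ratfun_image)
  ultimately show ?thesis
    by linarith
qed

lemma card_le_choose_if_unique_partner:
  fixes P :: "'i \<Rightarrow> ('a::field^'n) set" and pt :: "'i \<Rightarrow> 'i"
  assumes "finite I"
    and subspaces: "\<And>i. i \<in> I \<Longrightarrow> vec.subspace (P i)"
    and dims: "\<And>i. i \<in> I \<Longrightarrow> vec.dim (P i) = k"
    and pt: "\<And>i. i \<in> I \<Longrightarrow> pt i \<in> I"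
    and small: "\<And>i. i \<in> I \<Longrightarrow> vec.dim (P i \<inter> P (pt i)) < t"
    and large: "\<And>i j. i \<in> I \<Longrightarrow> j \<in> I \<Longrightarrow> j \<noteq> pt i \<Longrightarrow> t \<le> vec.dim (P i \<inter> P j)"
    and "0 < t" "t \<le> k" "2 * k \<le> CARD('n)"
  shows "card I \<le> (2 * (k - t + 1)) choose (k - t + 1)"
proof (rule card_le_choose_if_unique_partner_infinite
    [where P = "\<lambda>i. vec.span (vec_to_ratfun ` P i)", OF infinite_UNIV_ratfun assms(1) _ _ pt _ _ assms(7-9)])
  show "vec.dim (vec.span (vec_to_ratfun ` P i)) = k" if "i \<in> I" for i
    using dims[OF that] by (simp add: dim_vec_to_ratfun_image)
  show "vec.dim (vec.span (vec_to_ratfun ` P i) \<inter> vec.span (vec_to_ratfun ` P (pt i))) < t"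
    if "i \<in> I" for i
    using small[OF that] by (simp add: dim_span_vec_to_ratfun_Int subspaces pt that)
  show "t \<le> vec.dim (vec.span (vec_to_ratfun ` P i) \<inter> vec.span (vec_to_ratfun ` P j))"
    if "i \<in> I" "j \<in> I" "j \<noteq> pt i" for i j
    using large[OF that] by (simp add: dim_span_vec_to_ratfun_Int subspaces that)
qed simp

section \<open>Almost t-intersecting families\<close>

lemma tau_le_dim: "t_cover t \<F> W \<Longrightarrow> tau t \<F> \<le> vec.dim W"
  unfolding tau_def by (rule Least_le) blast

lemma almost_t_intersecting_partner:
  fixes \<F> :: "('a::{field,finite}^'n) set set"
  assumes "\<F> \<subseteq> Gr k" and "almost_t_intersecting t \<F>" and "tau t \<F> \<ge> k + 1"
  obtains pt where "\<And>X. X \<in> \<F> \<Longrightarrow> pt X \<in> \<F>"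
    and "\<And>X. X \<in> \<F> \<Longrightarrow> vec.dim (X \<inter> pt X) < t"
    and "\<And>X Y. X \<in> \<F> \<Longrightarrow> Y \<in> \<F> \<Longrightarrow> Y \<noteq> pt X \<Longrightarrow> t \<le> vec.dim (X \<inter> Y)"
proof -
  have "\<exists>Y\<in>\<F>. vec.dim (X \<inter> Y) < t" if "X \<in> \<F>" for X
  proof (rule ccontr)
    assume "\<not> (\<exists>Y\<in>\<F>. vec.dim (X \<inter> Y) < t)"
    then have "t_cover t \<F> X"
      using assms(1) that by (auto simp: t_cover_def Gr_def)
    then have "tau t \<F> \<le> k"
      using tau_le_dim assms(1) that by (force simp: Gr_def)
    then show False
      using assms(3) by simp
  qed
  then obtain pt where pt: "\<And>X. X \<in> \<F> \<Longrightarrow> pt X \<in> \<F> \<and> vec.dim (X \<inter> pt X) < t"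
    by metis
  moreover have "t \<le> vec.dim (X \<inter> Y)" if "X \<in> \<F>" "Y \<in> \<F>" "Y \<noteq> pt X" for X Y
  proof (rule ccontr)
    assume "\<not> t \<le> vec.dim (X \<inter> Y)"
    then have "{Y, pt X} \<subseteq> {F' \<in> \<F>. vec.dim (X \<inter> F') < t}"
      using that pt[OF that(1)] by auto
    moreover have "card {F' \<in> \<F>. vec.dim (X \<inter> F') < t} \<le> 1"
      using assms(2) that(1) by (simp add: almost_t_intersecting_def)
    ultimately have "card {Y, pt X} \<le> 1"
      by (meson card_mono finite order_trans)
    then show False
      using that(3) by simp
  qed
  ultimately show ?thesis
    using that by blast
qed

theorem lemma3p1:
  fixes \<F> :: "('a::{field,finite}^'n) set set" and k t :: nat
  assumes "t > 0" and "k \<ge> t + 1" and "CARD('n) \<ge> 2 * k"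
    and "\<F> \<subseteq> Gr k"
    and "almost_t_intersecting t \<F>"
    and "tau t \<F> \<ge> k + 1"
  shows "card \<F> \<le> (2 * k - 2 * t + 2) choose (k - t + 1)"
proof -
  obtain pt where "\<And>X. X \<in> \<F> \<Longrightarrow> pt X \<in> \<F>"
    and "\<And>X. X \<in> \<F> \<Longrightarrow> vec.dim (X \<inter> pt X) < t"
    and "\<And>X Y. X \<in> \<F> \<Longrightarrow> Y \<in> \<F> \<Longrightarrow> Y \<noteq> pt X \<Longrightarrow> t \<le> vec.dim (X \<inter> Y)"
    using almost_t_intersecting_partner[OF assms(4-6)] by blast
  moreover have "\<And>X. X \<in> \<F> \<Longrightarrow> vec.subspace X" "\<And>X. X \<in> \<F> \<Longrightarrow> vec.dim X = k"
    using assms(4) by (auto simp: Gr_def)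
  ultimately have "card \<F> \<le> (2 * (k - t + 1)) choose (k - t + 1)"
    using assms(1-3) by (intro card_le_choose_if_unique_partner[of \<F> "\<lambda>X. X" k pt t]) simp_all
  moreover have "2 * (k - t + 1) = 2 * k - 2 * t + 2"
    using assms(2) by simp
  ultimately show ?thesis
    by simp
qed

end
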